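(* Given distributions $F_S,F_B$, let $p^*:=\inf\{p:\mathbb{P}[S\ge p]\le 1/5\}$. If $\mathbb{P}[B\le p^*]\le 1/5$, then $\mathsf{W}(p^*;F_S,F_B)\ge\frac{17}{25}\,\mathsf{OPT\text{-}W}(F_S,F_B)$.
   Context: Asymmetric bilateral trade: $S\sim F_S$, $B\sim F_B$ independent, distributions on $[0,\infty)$ with finite means. Posting price $p$, trade iff $B>p\ge S$. $\mathsf{W}(p;F_S,F_B)=\mathbb{E}[S+(B-S)\mathbf 1_{B>p\ge S}]$, $\mathsf{OPT\text{-}W}(F_S,F_B)=\mathbb{E}[\max\{B,S\}]$. *)

theory Defs
  imports "HOL-Probability.Probability"
begin

definition valid_dist :: "real measure \<Rightarrow> bool" where
  "valid_dist F \<longleftrightarrow> prob_space F \<and> sets F = sets borel \<and>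
     (AE x in F. 0 \<le> x) \<and> integrable F (\<lambda>x. x)"

definition GFT_W :: "real \<Rightarrow> real measure \<Rightarrow> real measure \<Rightarrow> real" where
  "GFT_W p FS FB = (\<integral>z. (fst z + (snd z - fst z) *
       (if snd z > p \<and> p \<ge> fst z then 1 else 0)) \<partial>(FS \<Otimes>\<^sub>M FB))"

definition OPT_W :: "real measure \<Rightarrow> real measure \<Rightarrow> real" where
  "OPT_W FS FB = (\<integral>z. max (snd z) (fst z) \<partial>(FS \<Otimes>\<^sub>M FB))"

definition p_star :: "real measure \<Rightarrow> real" where
  "p_star FS = Inf {p. measure FS {s. s \<ge> p} \<le> 1/5}"

end

theory Submission
  imports Defs
begin

(*
  Write p = p*, alpha = P[S > p], sigma = P[S < p], beta = P[B \<le> p] and D = E[(B - p)^+].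
  Right-continuity of the distribution function of S at the infimum p* gives alpha \<le> 1/5,
  left-continuity gives sigma \<le> 4/5. For s, b, p \<ge> 0 the welfare lost by posting p is at most
  1{s > p} (b - p)^+ + p 1{s < p} 1{b \<le> p}, and max b s \<ge> p + (b - p)^+ - p 1{s < p} 1{b \<le> p}.
  Taking expectations under independence, OPT - W \<le> alpha D + p sigma beta \<le> D/5 + 4p/25,
  while OPT \<ge> 21p/25 + D, so OPT - W \<le> 8/25 OPT.
*)

context real_distribution
begin

lemma measure_ge_eq: "measure M {s. q \<le> s} = 1 - measure M {..<q}"
proof -
  have "prob (space M - {..<q}) = 1 - prob {..<q}" by (rule prob_compl) simp
  moreover have "space M - {..<q} = {s. q \<le> s}" by auto
  ultimately show ?thesis by simp
qed

lemma measure_gt_eq: "measure M {s. q < s} = 1 - cdf M q"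
proof -
  have "prob (space M - {..q}) = 1 - prob {..q}" by (rule prob_compl) simp
  moreover have "space M - {..q} = {s. q < s}" by auto
  ultimately show ?thesis by (simp add: cdf_def)
qed

lemma p_star_set_nonempty: "\<exists>q. measure M {s. q \<le> s} \<le> 1/5"
proof -
  have "\<forall>\<^sub>F x in at_top. cdf M x > 4/5"
    using cdf_lim_at_top_prob by (rule order_tendstoD) simp
  then obtain x where "cdf M x > 4/5" by (auto simp: eventually_at_top_linorder)
  moreover have "measure M {s. x + 1 \<le> s} \<le> measure M {s. x < s}"
    by (intro finite_measure_mono) auto
  ultimately show ?thesis using measure_gt_eq[of x] by (intro exI[of _ "x + 1"]) linarith
qed

lemma p_star_set_bdd_below: "bdd_below {q. measure M {s. q \<le> s} \<le> 1/5}"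
proof -
  have "\<forall>\<^sub>F x in at_bot. cdf M x < 4/5"
    using cdf_lim_at_bot by (rule order_tendstoD) simp
  then obtain x where x: "cdf M x < 4/5" by (auto simp: eventually_at_bot_linorder)
  have below: "x < q" if "measure M {s. q \<le> s} \<le> 1/5" for q
  proof (rule ccontr)
    assume "\<not> x < q"
    then have "measure M {..<q} \<le> cdf M x"
      unfolding cdf_def by (intro finite_measure_mono) auto
    then show False using that x measure_ge_eq[of q] by linarith
  qed
  then show ?thesis by (intro bdd_belowI[of _ x] less_imp_le) blast
qed

lemma measure_greater_p_star: "measure M {s. p_star M < s} \<le> 1/5"
proof -
  have upper: "cdf M q \<ge> 4/5" if q: "p_star M < q" for q
  proof -
    obtain r where r: "measure M {s. r \<le> s} \<le> 1/5" "r < q"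
      using cInf_lessD[OF _ q[unfolded p_star_def]] p_star_set_nonempty by auto
    have "measure M {s. q < s} \<le> measure M {s. r \<le> s}"
      using r by (intro finite_measure_mono) auto
    then show ?thesis using r measure_gt_eq[of q] by linarith
  qed
  have "(cdf M \<longlongrightarrow> cdf M (p_star M)) (at_right (p_star M))"
    using cdf_is_right_cont by (simp add: continuous_within)
  moreover have "\<forall>\<^sub>F q in at_right (p_star M). 4/5 \<le> cdf M q"
    using upper by (intro eventually_at_rightI[of _ "p_star M + 1"]) auto
  ultimately have "cdf M (p_star M) \<ge> 4/5"
    by (rule tendsto_lowerbound) simp
  then show ?thesis using measure_gt_eq by simp
qed

lemma measure_less_p_star: "measure M {s. s < p_star M} \<le> 4/5"
proof -
  have lower: "cdf M q \<le> 4/5" if q: "q < p_star M" for q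
  proof -
    define r where "r = (q + p_star M) / 2"
    have "q < r" "r < p_star M" using q by (auto simp: r_def)
    have "r \<notin> {q. measure M {s. q \<le> s} \<le> 1/5}"
      using cInf_lower[OF _ p_star_set_bdd_below] \<open>r < p_star M\<close> unfolding p_star_def by force
    moreover have "cdf M q \<le> measure M {..<r}"
      using \<open>q < r\<close> unfolding cdf_def by (intro finite_measure_mono) auto
    ultimately show ?thesis using measure_ge_eq[of r] by simp
  qed
  have "\<forall>\<^sub>F q in at_left (p_star M). cdf M q \<le> 4/5"
    using lower by (intro eventually_at_leftI[of "p_star M - 1"]) auto
  with cdf_at_left have "measure M {..<p_star M} \<le> 4/5"
    by (rule tendsto_upperbound) simp
  then show ?thesis by (simp add: lessThan_def)
qed

lemma p_star_nonneg:
  assumes "AE x in M. 0 \<le> x"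
  shows "0 \<le> p_star M"
  unfolding p_star_def
proof (rule cInf_greatest)
  show "{q. measure M {s. q \<le> s} \<le> 1/5} \<noteq> {}" using p_star_set_nonempty by auto
  fix q assume q: "q \<in> {q. measure M {s. q \<le> s} \<le> 1/5}"
  show "0 \<le> q"
  proof (rule ccontr)
    assume "\<not> 0 \<le> q"
    from assms have "AE x in M. x \<in> {s. q \<le> s}"
      by eventually_elim (use \<open>\<not> 0 \<le> q\<close> in auto)
    then have "measure M {s. q \<le> s} = 1" by (simp add: prob_eq_1)
    then show False using q by simp
  qed
qed

end

lemma (in pair_sigma_finite)
  fixes f :: "'a \<Rightarrow> real" and g :: "'b \<Rightarrow> real"
  assumes f: "integrable M1 f" and g: "integrable M2 g"
  shows integrable_mult_fst_snd: "integrable (M1 \<Otimes>\<^sub>M M2) (\<lambda>z. f (fst z) * g (snd z))"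
    and integral_mult_fst_snd:
      "(\<integral>z. f (fst z) * g (snd z) \<partial>(M1 \<Otimes>\<^sub>M M2)) = (\<integral>x. f x \<partial>M1) * (\<integral>y. g y \<partial>M2)"
proof -
  have [measurable]: "f \<in> borel_measurable M1" "g \<in> borel_measurable M2" using f g by auto
  show int: "integrable (M1 \<Otimes>\<^sub>M M2) (\<lambda>z. f (fst z) * g (snd z))"
  proof (rule Fubini_integrable)
    have "(\<lambda>x. \<integral>y. norm (f (fst (x, y)) * g (snd (x, y))) \<partial>M2)
        = (\<lambda>x. norm (f x) * (\<integral>y. norm (g y) \<partial>M2))"
      by (simp add: abs_mult)
    then show "integrable M1 (\<lambda>x. \<integral>y. norm (f (fst (x, y)) * g (snd (x, y))) \<partial>M2)"
      using f by simp
  qed (use g in simp_all)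
  show "(\<integral>z. f (fst z) * g (snd z) \<partial>(M1 \<Otimes>\<^sub>M M2))
      = (\<integral>x. f x \<partial>M1) * (\<integral>y. g y \<partial>M2)"
    using integral_fst'[OF int] by simp
qed

lemma welfare_loss_pointwise_le:
  fixes s b p :: real
  assumes "0 \<le> s" "0 \<le> b" "0 \<le> p"
  shows "max b s - (s + (b - s) * (if b > p \<and> p \<ge> s then 1 else 0)) \<le>
    indicator {s. p < s} s * max (b - p) 0 + p * (indicator {s. s < p} s * indicator {b. b \<le> p} b)"
  using assms by (auto simp: indicator_def max_def)

lemma max_pointwise_ge:
  fixes s b p :: real
  assumes "0 \<le> s" "0 \<le> b" "0 \<le> p"
  shows "p + max (b - p) 0 - p * (indicator {s. s < p} s * indicator {b. b \<le> p} b) \<le> max b s"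
  using assms by (auto simp: indicator_def max_def)

locale bilateral_trade =
  fixes FS FB :: "real measure"
  assumes valid_seller: "valid_dist FS" and valid_buyer: "valid_dist FB"
begin

sublocale S: real_distribution FS
  using valid_seller by (simp add: valid_dist_def real_distribution_def real_distribution_axioms_def)

sublocale B: real_distribution FB
  using valid_buyer by (simp add: valid_dist_def real_distribution_def real_distribution_axioms_def)

sublocale pair_prob_space FS FB ..

lemma AE_nonneg: "AE z in FS \<Otimes>\<^sub>M FB. 0 \<le> fst z \<and> 0 \<le> snd z"
proof (rule AE_pair_measure)
  show "AE s in FS. AE b in FB. 0 \<le> fst (s, b) \<and> 0 \<le> snd (s, b)"
    using valid_seller valid_buyer unfolding valid_dist_def by (auto elim!: AE_mp)
qed measurable

lemma integrable_bounded_by_values: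
  assumes [measurable]: "f \<in> borel_measurable (FS \<Otimes>\<^sub>M FB)"
    and bound: "\<And>z. \<bar>f z\<bar> \<le> \<bar>fst z\<bar> + \<bar>snd z\<bar>"
  shows "integrable (FS \<Otimes>\<^sub>M FB) f"
proof (rule Bochner_Integration.integrable_bound)
  have "integrable FS abs" "integrable FB abs"
    using valid_seller valid_buyer unfolding valid_dist_def by (auto dest: integrable_abs)
  from integrable_mult_fst_snd[OF this(1) B.integrable_const[of 1]]
    integrable_mult_fst_snd[OF S.integrable_const[of 1] this(2)]
  show "integrable (FS \<Otimes>\<^sub>M FB) (\<lambda>z. \<bar>fst z\<bar> + \<bar>snd z\<bar>)" by simp
  show "AE z in FS \<Otimes>\<^sub>M FB. norm (f z) \<le> norm (\<bar>fst z\<bar> + \<bar>snd z\<bar>)"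
    using bound by simp
qed measurable

lemma integrable_indicator_borel:
  assumes "A \<in> sets borel"
  shows "integrable FS (indicator A :: real \<Rightarrow> real)" "integrable FB (indicator A :: real \<Rightarrow> real)"
  using assms by (simp_all add: S.emeasure_finite B.emeasure_finite less_top[symmetric])

lemma integrable_excess: "integrable FB (\<lambda>b. max (b - p) 0)"
  using valid_buyer by (auto simp: valid_dist_def)

lemma integrable_OPT_W: "integrable (FS \<Otimes>\<^sub>M FB) (\<lambda>z. max (snd z) (fst z))"
  by (rule integrable_bounded_by_values) auto

lemma integrable_GFT_W:
  "integrable (FS \<Otimes>\<^sub>M FB) (\<lambda>z. fst z + (snd z - fst z) * (if snd z > p \<and> p \<ge> fst z then 1 else 0))"
  by (rule integrable_bounded_by_values) auto

lemma
  assumes "A \<in> sets borel" and "integrable FB g"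
  shows integrable_indicator_fst_mult:
      "integrable (FS \<Otimes>\<^sub>M FB) (\<lambda>z. indicator A (fst z) * g (snd z))"
    and integral_indicator_fst_mult:
      "(\<integral>z. indicator A (fst z) * g (snd z) \<partial>(FS \<Otimes>\<^sub>M FB)) = measure FS A * (\<integral>b. g b \<partial>FB)"
  using integrable_mult_fst_snd[OF integrable_indicator_borel(1)[OF assms(1)] assms(2)]
    integral_mult_fst_snd[OF integrable_indicator_borel(1)[OF assms(1)] assms(2)]
  by simp_all

lemma
  assumes "A \<in> sets borel" and "B \<in> sets borel"
  shows integrable_indicator_fst_indicator_snd:
      "integrable (FS \<Otimes>\<^sub>M FB) (\<lambda>z. indicator A (fst z) * indicator B (snd z) :: real)"
    and integral_indicator_fst_indicator_snd:
      "(\<integral>z. indicator A (fst z) * indicator B (snd z) \<partial>(FS \<Otimes>\<^sub>M FB)) = measure FS A * measure FB B"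
  using integrable_indicator_fst_mult[OF assms(1) integrable_indicator_borel(2)[OF assms(2)]]
    integral_indicator_fst_mult[OF assms(1) integrable_indicator_borel(2)[OF assms(2)]]
  by simp_all

lemma GFT_W_lower_bound:
  assumes "0 \<le> p"
  shows "OPT_W FS FB - (measure FS {s. p < s} * (\<integral>b. max (b - p) 0 \<partial>FB)
      + p * (measure FS {s. s < p} * measure FB {b. b \<le> p})) \<le> GFT_W p FS FB"
proof -
  let ?L = "\<lambda>z. indicator {s. p < s} (fst z) * max (snd z - p) 0
      + p * (indicator {s. s < p} (fst z) * indicator {b. b \<le> p} (snd z))"
  have sold: "integrable (FS \<Otimes>\<^sub>M FB) (\<lambda>z. indicator {s. p < s} (fst z) * max (snd z - p) 0)"
    "(\<integral>z. indicator {s. p < s} (fst z) * max (snd z - p) 0 \<partial>(FS \<Otimes>\<^sub>M FB))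
      = measure FS {s. p < s} * (\<integral>b. max (b - p) 0 \<partial>FB)"
    using integrable_indicator_fst_mult[OF _ integrable_excess, of "{s. p < s}"]
      integral_indicator_fst_mult[OF _ integrable_excess, of "{s. p < s}"]
    by simp_all
  have unsold: "integrable (FS \<Otimes>\<^sub>M FB)
      (\<lambda>z. indicator {s. s < p} (fst z) * indicator {b. b \<le> p} (snd z) :: real)"
    "(\<integral>z. indicator {s. s < p} (fst z) * indicator {b. b \<le> p} (snd z) \<partial>(FS \<Otimes>\<^sub>M FB))
      = measure FS {s. s < p} * measure FB {b. b \<le> p}"
    by (simp_all add: integrable_indicator_fst_indicator_snd integral_indicator_fst_indicator_snd)
  have int_L: "integrable (FS \<Otimes>\<^sub>M FB) ?L"
    by (intro Bochner_Integration.integrable_add integrable_mult_right sold(1) unsold(1))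
  have "(\<integral>z. ?L z \<partial>(FS \<Otimes>\<^sub>M FB)) = measure FS {s. p < s} * (\<integral>b. max (b - p) 0 \<partial>FB)
      + p * (measure FS {s. s < p} * measure FB {b. b \<le> p})"
    by (simp add: Bochner_Integration.integral_add[OF sold(1) integrable_mult_right[OF unsold(1)]]
        sold(2) unsold(2))
  moreover have "(\<integral>z. max (snd z) (fst z) - ?L z \<partial>(FS \<Otimes>\<^sub>M FB))
      = OPT_W FS FB - (\<integral>z. ?L z \<partial>(FS \<Otimes>\<^sub>M FB))"
    unfolding OPT_W_def by (rule Bochner_Integration.integral_diff[OF integrable_OPT_W int_L])
  moreover have "(\<integral>z. max (snd z) (fst z) - ?L z \<partial>(FS \<Otimes>\<^sub>M FB)) \<le> GFT_W p FS FB"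
    unfolding GFT_W_def
  proof (rule integral_mono_AE[OF Bochner_Integration.integrable_diff[OF integrable_OPT_W int_L]
        integrable_GFT_W])
    show "AE z in FS \<Otimes>\<^sub>M FB. max (snd z) (fst z) - ?L z
        \<le> fst z + (snd z - fst z) * (if snd z > p \<and> p \<ge> fst z then 1 else 0)"
      using AE_nonneg
    proof eventually_elim
      case (elim z)
      then show ?case using welfare_loss_pointwise_le[of "fst z" "snd z" p] assms by linarith
    qed
  qed
  ultimately show ?thesis by linarith
qed

lemma OPT_W_lower_bound:
  assumes "0 \<le> p"
  shows "p + (\<integral>b. max (b - p) 0 \<partial>FB) - p * (measure FS {s. s < p} * measure FB {b. b \<le> p})
    \<le> OPT_W FS FB"
proof -
  let ?K = "\<lambda>z. p + max (snd z - p) 0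
      - p * (indicator {s. s < p} (fst z) * indicator {b. b \<le> p} (snd z))"
  have excess: "integrable (FS \<Otimes>\<^sub>M FB) (\<lambda>z. max (snd z - p) 0)"
    "(\<integral>z. max (snd z - p) 0 \<partial>(FS \<Otimes>\<^sub>M FB)) = (\<integral>b. max (b - p) 0 \<partial>FB)"
    using integrable_indicator_fst_mult[OF _ integrable_excess, of UNIV]
      integral_indicator_fst_mult[OF _ integrable_excess, of UNIV]
    by (simp_all add: S.prob_space[simplified])
  have unsold: "integrable (FS \<Otimes>\<^sub>M FB)
      (\<lambda>z. indicator {s. s < p} (fst z) * indicator {b. b \<le> p} (snd z) :: real)"
    "(\<integral>z. indicator {s. s < p} (fst z) * indicator {b. b \<le> p} (snd z) \<partial>(FS \<Otimes>\<^sub>M FB))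
      = measure FS {s. s < p} * measure FB {b. b \<le> p}"
    by (simp_all add: integrable_indicator_fst_indicator_snd integral_indicator_fst_indicator_snd)
  have int_K: "integrable (FS \<Otimes>\<^sub>M FB) ?K"
    by (intro Bochner_Integration.integrable_diff Bochner_Integration.integrable_add
        integrable_mult_right excess(1) unsold(1) integrable_const)
  have "(\<integral>z. ?K z \<partial>(FS \<Otimes>\<^sub>M FB))
      = p + (\<integral>b. max (b - p) 0 \<partial>FB) - p * (measure FS {s. s < p} * measure FB {b. b \<le> p})"
    using excess unsold by (simp add: prob_space)
  moreover have "(\<integral>z. ?K z \<partial>(FS \<Otimes>\<^sub>M FB)) \<le> OPT_W FS FB"
    unfolding OPT_W_def
  proof (rule integral_mono_AE[OF int_K integrable_OPT_W])
    show "AE z in FS \<Otimes>\<^sub>M FB. ?K z \<le> max (snd z) (fst z)"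
      using AE_nonneg
    proof eventually_elim
      case (elim z)
      then show ?case using max_pointwise_ge[of "fst z" "snd z" p] assms by linarith
    qed
  qed
  ultimately show ?thesis by simp
qed

end

theorem lemma12:
  fixes FS FB :: "real measure"
  assumes "valid_dist FS" and "valid_dist FB"
    and "measure FB {b. b \<le> p_star FS} \<le> 1/5"
  shows "GFT_W (p_star FS) FS FB \<ge> 17/25 * OPT_W FS FB"
proof -
  interpret bilateral_trade FS FB by (rule bilateral_trade.intro) (fact assms)+
  define p where "p = p_star FS"
  define D where "D = (\<integral>b. max (b - p) 0 \<partial>FB)"
  define x where "x = p * (measure FS {s. s < p} * measure FB {b. b \<le> p})"
  have "0 \<le> p" unfolding p_def using valid_seller by (intro S.p_star_nonneg) (simp add: valid_dist_def)
  have "0 \<le> D" unfolding D_def by (rule integral_nonneg_AE) simp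
  have "measure FS {s. s < p} * measure FB {b. b \<le> p} \<le> 4/5 * (1/5)"
    using S.measure_less_p_star assms(3) unfolding p_def by (intro mult_mono) auto
  then have "x \<le> p * (4/5 * (1/5))" unfolding x_def using \<open>0 \<le> p\<close> by (rule mult_left_mono)
  have "measure FS {s. p < s} * D \<le> 1/5 * D"
    using S.measure_greater_p_star \<open>0 \<le> D\<close> unfolding p_def by (intro mult_right_mono)
  moreover have "OPT_W FS FB - (measure FS {s. p < s} * D + x) \<le> GFT_W p FS FB"
    using GFT_W_lower_bound[OF \<open>0 \<le> p\<close>] unfolding D_def x_def .
  moreover have "p + D - x \<le> OPT_W FS FB"
    using OPT_W_lower_bound[OF \<open>0 \<le> p\<close>] unfolding D_def x_def .
  ultimately show ?thesis
    using \<open>x \<le> p * (4/5 * (1/5))\<close> \<open>0 \<le> p\<close> \<open>0 \<le> D\<close> unfolding p_def by linarith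
qed

end
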